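(* At the end of every iteration of the main loop of MAPTree, for every OR node $u\in\mathcal G'$, $UB[u]$ equals the minimum cost of a partial solution rooted at $u$ in $\mathcal G'$ (and $UB[u]=+\infty$ if no such partial solution exists).
   Context: Let $x_1,\dots,x_N\in\{0,1\}^F$ be a binary dataset $\mathcal X$ with labels $\mathcal Y\in\{0,1\}^N$, $[N]=\{1,\dots,N\}$. For $\mathcal I\subseteq[N]$, $f\in[F]$, $k\in\{0,1\}$ let $\mathcal I|_{f=k}=\{i\in\mathcal I:(x_i)_f=k\}$, $c^k(\mathcal I)=|\{i\in\mathcal I:y_i=k\}|$, $\mathcal V(\mathcal I)=\{f:\mathcal I|_{f=0}\neq\emptyset\text{ and }\mathcal I|_{f=1}\neq\emptyset\}$. Fix $\rho^1,\rho^0>0$, $\alpha\in(0,1)$, $\beta\ge0$; $\ell_{\rm leaf}(c^1,c^0)=B(c^1+\rho^1,c^0+\rho^0)/B(\rho^1,\rho^0)$ ($B$ the Beta function), $p_{\rm split}(d)=\alpha(1+d)^{-\beta}$, $p_{\rm leaf}(d,\mathcal I)=1$ if $\mathcal V(\mathcal I)=\emptyset$ else $1-p_{\rm split}(d)$, $p_{\rm inner}(d,\mathcal I)=0$ if $\mathcal V(\mathcal I)=\emptyset$ else $p_{\rm split}(d)/|\mathcal V(\mathcal I)|$; $-\log0=+\infty$, and a minimum over an empty set is $+\infty$. Graph $\mathcal G=\mathcal G_{\mathcal X,\mathcal Y}$: for nonempty $\mathcal I\subseteq[N]$, $d\in\{0,\dots,F\}$, an OR node $o_{\mathcal I,d}$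 with terminal child $t_{\mathcal I,d}$ (edge cost $-\log p_{\rm leaf}(d,\mathcal I)-\log\ell_{\rm leaf}(c^1(\mathcal I),c^0(\mathcal I))$); for $d<F$, $f\in\mathcal V(\mathcal I)$, an AND child $a_{\mathcal I,d,f}$ (edge cost $-\log p_{\rm inner}(d,\mathcal I)$) with cost-$0$ edges to $o_{\mathcal I|_{f=0},d+1}$, $o_{\mathcal I|_{f=1},d+1}$; root $r=o_{[N],0}$; only nodes reachable from $r$ kept. A partial solution rooted at an OR node $u$ in $\mathcal G'$ is a set $\mathcal S\subseteq\mathcal G'$ containing $u$, all of whose nodes are reachable from $u$ inside $\mathcal S$, such that every AND node of $\mathcal S$ has both children in $\mathcal S$ and every OR node of $\mathcal S$ has exactly one child in $\mathcal S$; its cost is the sum of the costs of edges $v\to w$ with $v,w\in\mathcal S$. Heuristic: $h(o_{\mathcal I,d})=-\max\{\log\ell_{\rm leaf}(c^1(\mathcal I),c^0(\mathcal I)),\log p_{\rm split}(d)+\log\ell_{\rm leaf}(c^1(\mathcal I),0)+\log\ell_{\rm leaf}(0,c^0(\mathcal I))\}$. MAPTree maintains a node set $\mathcal G'$, a set $\mathcal E$ of expanded OR nodes, and values $LB[u],UB[u]\in\mathbb R\cup\{+\infty\}$ for OR nodes ($UB[u]=+\infty$ until set); for an AND node $a$ with children $o_0,o_1$, $LB[a]=LB[o_0]+LB[o_1]$ and $UB[a]=UB[o_0]+UB[o_1]$. Initialize $\mathcal G'=\{r\}$, $\mathcal E=\emptyset$, $LB[r]=h(r)$, $UB[r]=+\infty$.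 While $LB[r]<UB[r]$ (and optionally while time remains): (1) $o:=r$; while $o\in\mathcal E$, choose an AND child $a^*$ of $o$ minimizing $\mathrm{cost}(o,a)+LB[a]$, with children $o_0$ (value-0 side) and $o_1$, and set $o:=o_0$ if $UB[o_0]-LB[o_0]>UB[o_1]-LB[o_1]$, else $o:=o_1$. (2) Add $o$ to $\mathcal E$ and its terminal child to $\mathcal G'$; for each AND child $a$ of $o$ with children $o_0,o_1$, add $a,o_0,o_1$ to $\mathcal G'$ and set $LB[o_0]:=h(o_0)$, $LB[o_1]:=h(o_1)$. (3) Starting from $Q=\{o\}$, repeatedly remove from $Q$ an OR node $u$ of maximal depth, compute $v=\min\{\min_a(\mathrm{cost}(u,a)+LB[a]),\mathrm{cost}(u,t_u)\}$ over the AND children $a$ and terminal child $t_u$ of $u$; if $v>LB[u]$, set $LB[u]:=v$ and add to $Q$ every OR node of $\mathcal G'$ that is the parent of an AND node of $\mathcal G'$ having $u$ as child. (4) The same with $UB$ in place of $LB$, updating when $v<UB[u]$. *)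

theory Defs
  imports "HOL-Analysis.Analysis"
begin

text \<open>Nodes of the AND/OR graph: OR node o_{I,d}, AND node a_{I,d,f}, terminal node t_{I,d}.
  Data points are indexed by 1..N, features by 1..F; binary values are booleans
  (True = 1, False = 0).\<close>

datatype node = OrN "nat set" nat | AndN "nat set" nat nat | TermN "nat set" nat

fun is_or :: "node \<Rightarrow> bool" where
  "is_or (OrN _ _) = True" | "is_or _ = False"
fun is_and :: "node \<Rightarrow> bool" where
  "is_and (AndN _ _ _) = True" | "is_and _ = False"
fun is_term :: "node \<Rightarrow> bool" where
  "is_term (TermN _ _) = True" | "is_term _ = False"
fun depth :: "node \<Rightarrow> nat" where
  "depth (OrN _ d) = d" | "depth (AndN _ d _) = d" | "depth (TermN _ d) = d"

definition neglog :: "real \<Rightarrow> ereal" where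
  "neglog p = (if p = 0 then \<infinity> else ereal (- ln p))"

text \<open>An algorithm state: (G', E, LB, UB).\<close>
type_synonym state = "node set \<times> node set \<times> (node \<Rightarrow> ereal) \<times> (node \<Rightarrow> ereal)"

locale maptree =
  fixes N F :: nat
    and X :: "nat \<Rightarrow> nat \<Rightarrow> bool"   \<comment> \<open>X i f = (x_i)_f\<close>
    and Y :: "nat \<Rightarrow> bool"            \<comment> \<open>Y i = (y_i = 1)\<close>
    and rho1 rho0 alpha beta :: real
begin

definition restr :: "nat set \<Rightarrow> nat \<Rightarrow> bool \<Rightarrow> nat set" where
  "restr I f k = {i \<in> I. X i f = k}"

definition c1 :: "nat set \<Rightarrow> nat" where "c1 I = card {i \<in> I. Y i}"
definition c0 :: "nat set \<Rightarrow> nat" where "c0 I = card {i \<in> I. \<not> Y i}"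

definition Vs :: "nat set \<Rightarrow> nat set" where
  "Vs I = {f \<in> {1..F}. restr I f False \<noteq> {} \<and> restr I f True \<noteq> {}}"

definition lleaf :: "nat \<Rightarrow> nat \<Rightarrow> real" where
  "lleaf a b = Beta (real a + rho1) (real b + rho0) / Beta rho1 rho0"

definition psplit :: "nat \<Rightarrow> real" where
  "psplit d = alpha * (1 + real d) powr (- beta)"

definition pleaf :: "nat \<Rightarrow> nat set \<Rightarrow> real" where
  "pleaf d I = (if Vs I = {} then 1 else 1 - psplit d)"

definition pinner :: "nat \<Rightarrow> nat set \<Rightarrow> real" where
  "pinner d I = (if Vs I = {} then 0 else psplit d / real (card (Vs I)))"

fun edge :: "node \<Rightarrow> node \<Rightarrow> bool" where
  "edge (OrN I d) w = (w = TermN I d \<or> (\<exists>f. d < F \<and> f \<in> Vs I \<and> w = AndN I d f))"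
| "edge (AndN I d f) w = (w = OrN (restr I f False) (Suc d) \<or> w = OrN (restr I f True) (Suc d))"
| "edge (TermN _ _) w = False"

definition root :: node where "root = OrN {1..N} 0"

definition Gnodes :: "node set" where "Gnodes = {u. edge\<^sup>*\<^sup>* root u}"

fun cost :: "node \<Rightarrow> node \<Rightarrow> ereal" where
  "cost (OrN I d) (TermN _ _) = neglog (pleaf d I) + neglog (lleaf (c1 I) (c0 I))"
| "cost (OrN I d) (AndN _ _ _) = neglog (pinner d I)"
| "cost _ _ = 0"

fun h :: "node \<Rightarrow> ereal" where
  "h (OrN I d) = ereal (- max (ln (lleaf (c1 I) (c0 I)))
                     (ln (psplit d) + ln (lleaf (c1 I) 0) + ln (lleaf 0 (c0 I))))"
| "h _ = 0"

fun andval :: "(node \<Rightarrow> ereal) \<Rightarrow> node \<Rightarrow> ereal" where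
  "andval V (AndN I d f) = V (OrN (restr I f False) (Suc d)) + V (OrN (restr I f True) (Suc d))"
| "andval V _ = 0"

definition orval :: "node set \<Rightarrow> (node \<Rightarrow> ereal) \<Rightarrow> node \<Rightarrow> ereal" where
  "orval G V u = Inf ({cost u a + andval V a | a. a \<in> G \<and> is_and a \<and> edge u a}
                     \<union> {cost u t | t. t \<in> G \<and> is_term t \<and> edge u t})"

definition parents :: "node set \<Rightarrow> node \<Rightarrow> node set" where
  "parents G u = {p \<in> G. is_or p \<and> (\<exists>a \<in> G. is_and a \<and> edge p a \<and> edge a u)}"

text \<open>Steps (3)/(4): propagation with queue Q; nondeterministic choice of a node of
  maximal depth. better v old decides whether to update (v > old for LB, v < old for UB).\<close>
inductive propagate :: "(ereal \<Rightarrow> ereal \<Rightarrow> bool) \<Rightarrow> node set \<Rightarrow> (node \<Rightarrow> ereal)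
    \<Rightarrow> node set \<Rightarrow> (node \<Rightarrow> ereal) \<Rightarrow> bool" where
  prop_done: "propagate better G V {} V"
| prop_upd: "\<lbrakk> u \<in> Q; \<forall>q \<in> Q. depth q \<le> depth u; better (orval G V u) (V u);
          propagate better G (V(u := orval G V u)) ((Q - {u}) \<union> parents G u) V' \<rbrakk>
        \<Longrightarrow> propagate better G V Q V'"
| prop_noupd: "\<lbrakk> u \<in> Q; \<forall>q \<in> Q. depth q \<le> depth u; \<not> better (orval G V u) (V u);
          propagate better G V (Q - {u}) V' \<rbrakk>
        \<Longrightarrow> propagate better G V Q V'"

text \<open>Step (1): descent from u to the selected node ov (nondeterministic tie-breaking).\<close>
inductive descend :: "node set \<Rightarrow> node set \<Rightarrow> (node \<Rightarrow> ereal) \<Rightarrow> (node \<Rightarrow> ereal)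
    \<Rightarrow> node \<Rightarrow> node \<Rightarrow> bool" where
  stop: "u \<notin> E \<Longrightarrow> descend G E LB UB u u"
| down: "\<lbrakk> u \<in> E; a = AndN I d f; a \<in> G; edge u a;
           \<forall>b. b \<in> G \<and> is_and b \<and> edge u b \<longrightarrow> cost u a + andval LB a \<le> cost u b + andval LB b;
           o0 = OrN (restr I f False) (Suc d); o1 = OrN (restr I f True) (Suc d);
           descend G E LB UB (if UB o0 - LB o0 > UB o1 - LB o1 then o0 else o1) v \<rbrakk>
        \<Longrightarrow> descend G E LB UB u v"

text \<open>Step (2): the OR children of the AND children of ov (these get LB := h).\<close>
definition grandchildren :: "node \<Rightarrow> node set" where
  "grandchildren ov = {w. \<exists>a. is_and a \<and> edge ov a \<and> edge a w}"

definition expand_nodes :: "node \<Rightarrow> node set" where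
  "expand_nodes ov = {t. is_term t \<and> edge ov t} \<union> {a. is_and a \<and> edge ov a} \<union> grandchildren ov"

inductive iter :: "state \<Rightarrow> state \<Rightarrow> bool" where
  "\<lbrakk> LB root < UB root;
     descend G E LB UB root ov;
     G2 = G \<union> expand_nodes ov;
     LB2 = (\<lambda>w. if w \<in> grandchildren ov then h w else LB w);
     propagate (\<lambda>v old. v > old) G2 LB2 {ov} LB3;
     propagate (\<lambda>v old. v < old) G2 UB {ov} UB3 \<rbrakk>
   \<Longrightarrow> iter (G, E, LB, UB) (G2, E \<union> {ov}, LB3, UB3)"

definition init :: state where
  "init = ({root}, {}, (\<lambda>_. 0)(root := h root), (\<lambda>_. \<infinity>))"

definition partial_sol :: "node set \<Rightarrow> node \<Rightarrow> node set \<Rightarrow> bool" where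
  "partial_sol G u S \<longleftrightarrow> S \<subseteq> G \<and> u \<in> S
     \<and> (\<forall>w \<in> S. (\<lambda>a b. a \<in> S \<and> b \<in> S \<and> edge a b)\<^sup>*\<^sup>* u w)
     \<and> (\<forall>a \<in> S. is_and a \<longrightarrow> (\<forall>w. edge a w \<longrightarrow> w \<in> S))
     \<and> (\<forall>v \<in> S. is_or v \<longrightarrow> (\<exists>!w. w \<in> S \<and> edge v w))"

definition psol_cost :: "node set \<Rightarrow> ereal" where
  "psol_cost S = (\<Sum>(v, w) \<in> {(v, w). v \<in> S \<and> w \<in> S \<and> edge v w}. cost v w)"

end

definition MT_iter where "MT_iter N F X Y rho1 rho0 alpha beta = maptree.iter N F X Y rho1 rho0 alpha beta"
definition MT_init where "MT_init N F X Y rho1 rho0 alpha beta = maptree.init N Y rho1 rho0 alpha beta"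
definition MT_partial_sol where "MT_partial_sol N F X Y rho1 rho0 alpha beta = maptree.partial_sol F X"
definition MT_psol_cost where "MT_psol_cost N F X Y rho1 rho0 alpha beta = maptree.psol_cost F X Y rho1 rho0 alpha beta"

end

theory Submission
  imports Defs
begin

text \<open>
  Let \<open>opt_cost G x\<close> be the least cost of a partial solution rooted at \<open>x\<close> in \<open>G\<close>
  (\<open>\<infinity>\<close> if there is none). A partial solution rooted at an OR node consists of that node
  together with either a terminal child, or an AND child and partial solutions rooted at the
  two children of that AND node. These two parts are disjoint, since they live on the two
  halves of a split of the data, so their costs add up. Hence
  \<open>opt_cost G \<le> orval G (opt_cost G)\<close> on the OR nodes of \<open>G\<close>, and by induction on the size
  of partial solutions every \<open>V\<close> with \<open>V \<le> orval G V\<close> on these nodes lies below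
  \<open>opt_cost G\<close>.

  The upper-bound propagation keeps \<open>opt_cost G \<le> UB\<close> everywhere and \<open>UB \<le> orval G UB\<close>
  at every OR node outside the queue: an update replaces \<open>UB u\<close> by \<open>orval G UB u\<close>, which
  stays above \<open>opt_cost G u\<close> by monotonicity, and it can only break the inequality at the
  parents of \<open>u\<close>, which are enqueued. So \<open>UB = opt_cost G\<close> once the queue is empty.
  Expanding a node adds children to that node only and can only lower \<open>opt_cost\<close>, so before
  propagation the invariant holds with the queue consisting of the expanded node.
\<close>

context maptree
begin

section \<open>Structure of the AND/OR graph\<close>

fun node_data :: "node \<Rightarrow> nat set" where
  "node_data (OrN I _) = I" | "node_data (AndN I _ _) = I" | "node_data (TermN I _) = I"

lemma edge_from_or:
  assumes "edge v w" "is_or v"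
  shows "\<not> is_or w" "v = OrN (node_data w) (depth w)"
  using assms by (cases v; auto)+

lemma edge_from_and:
  assumes "edge a w" "is_and a"
  shows "is_or w" "depth w = Suc (depth a)"
  using assms by (cases a; auto)+

lemma or_parent_unique: "edge p w \<Longrightarrow> edge q w \<Longrightarrow> is_or p \<Longrightarrow> is_or q \<Longrightarrow> p = q"
  by (metis edge_from_or(2))

lemma not_edge_from_term: "is_term t \<Longrightarrow> \<not> edge t w"
  by (cases t) auto

lemma reaches_depth_mono: "edge\<^sup>*\<^sup>* v w \<Longrightarrow> depth v \<le> depth w"
proof (induction rule: rtranclp_induct)
  case (step y z)
  then show ?case by (cases y) auto
qed simp

lemma reaches_data_mono: "edge\<^sup>*\<^sup>* v w \<Longrightarrow> node_data w \<subseteq> node_data v"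
proof (induction rule: rtranclp_induct)
  case (step y z)
  then show ?case by (cases y) (auto simp: restr_def)
qed simp

text \<open>Properness is the invariant that keeps the subgraphs below the two children of an AND
  node apart: their nodes carry nonempty subsets of the two halves of the split.\<close>

fun proper_node :: "node \<Rightarrow> bool" where
  "proper_node (AndN I _ f) = (f \<in> Vs I)"
| "proper_node w = (node_data w \<noteq> {})"

lemma proper_node_data_nonempty: "proper_node w \<Longrightarrow> node_data w \<noteq> {}"
  by (cases w) (auto simp: Vs_def restr_def)

lemma reaches_proper: "edge\<^sup>*\<^sup>* v w \<Longrightarrow> proper_node v \<Longrightarrow> proper_node w"
proof (induction rule: rtranclp_induct)
  case (step y z)
  then show ?case by (cases y) (auto simp: Vs_def)
qed

lemma child_cones_disjoint:
  assumes "f \<in> Vs I" and "k \<noteq> k'"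
    and "edge\<^sup>*\<^sup>* (OrN (restr I f k) d) w" and "edge\<^sup>*\<^sup>* (OrN (restr I f k') d') w"
  shows False
proof -
  have "proper_node (OrN (restr I f b) e)" for b e
    using assms(1) by (cases b) (auto simp: Vs_def)
  then have "node_data w \<noteq> {}"
    using reaches_proper assms(3) proper_node_data_nonempty by blast
  moreover have "node_data w \<subseteq> restr I f k \<inter> restr I f k'"
    using reaches_data_mono[OF assms(3)] reaches_data_mono[OF assms(4)] by simp
  ultimately show False using \<open>k \<noteq> k'\<close> by (auto simp: restr_def)
qed

section \<open>Partial solutions\<close>

abbreviation edge_within :: "node set \<Rightarrow> node \<Rightarrow> node \<Rightarrow> bool" where
  "edge_within S \<equiv> \<lambda>a b. a \<in> S \<and> b \<in> S \<and> edge a b"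

lemma partial_sol_subset: "partial_sol G x S \<Longrightarrow> S \<subseteq> G"
  and partial_sol_root: "partial_sol G x S \<Longrightarrow> x \<in> S"
  and partial_sol_and_closed: "partial_sol G x S \<Longrightarrow> a \<in> S \<Longrightarrow> is_and a \<Longrightarrow> edge a w \<Longrightarrow> w \<in> S"
  and partial_sol_or_child: "partial_sol G x S \<Longrightarrow> v \<in> S \<Longrightarrow> is_or v \<Longrightarrow> \<exists>!w. w \<in> S \<and> edge v w"
  by (auto simp: partial_sol_def)

lemma partial_solI:
  assumes "S \<subseteq> G" "x \<in> S" "\<And>w. w \<in> S \<Longrightarrow> (edge_within S)\<^sup>*\<^sup>* x w"
    and "\<And>a w. a \<in> S \<Longrightarrow> is_and a \<Longrightarrow> edge a w \<Longrightarrow> w \<in> S"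
    and "\<And>v. v \<in> S \<Longrightarrow> is_or v \<Longrightarrow> \<exists>!w. w \<in> S \<and> edge v w"
  shows "partial_sol G x S"
  using assms unfolding partial_sol_def by (intro conjI ballI impI allI) blast+

lemma partial_sol_reaches_within: "partial_sol G x S \<Longrightarrow> w \<in> S \<Longrightarrow> (edge_within S)\<^sup>*\<^sup>* x w"
  unfolding partial_sol_def by blast

lemma partial_sol_reaches_within_mono:
  "partial_sol G x T \<Longrightarrow> T \<subseteq> S \<Longrightarrow> w \<in> T \<Longrightarrow> (edge_within S)\<^sup>*\<^sup>* x w"
  using mono_rtranclp[of "edge_within T" "edge_within S"] partial_sol_reaches_within by blast

lemma partial_sol_reaches: "partial_sol G x S \<Longrightarrow> w \<in> S \<Longrightarrow> edge\<^sup>*\<^sup>* x w"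
  unfolding partial_sol_def by (metis (no_types, lifting) mono_rtranclp)

lemma partial_sol_or_child_eq:
  "partial_sol G x S \<Longrightarrow> v \<in> S \<Longrightarrow> is_or v \<Longrightarrow> w \<in> S \<Longrightarrow> edge v w \<Longrightarrow> w' \<in> S \<Longrightarrow> edge v w'
    \<Longrightarrow> w' = w"
  using partial_sol_or_child by blast

definition subsolution :: "node set \<Rightarrow> node \<Rightarrow> node set" where
  "subsolution S r = {w \<in> S. (edge_within S)\<^sup>*\<^sup>* r w}"

lemma subsolution_edge_closed:
  assumes "v \<in> subsolution S r" "w \<in> S" "edge v w"
  shows "w \<in> subsolution S r"
proof -
  have "(edge_within S)\<^sup>*\<^sup>* r v" "v \<in> S" using assms(1) by (simp_all add: subsolution_def)
  then have "(edge_within S)\<^sup>*\<^sup>* r w" using assms(2,3) by (simp add: rtranclp.rtrancl_into_rtrancl)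
  then show ?thesis using assms(2) by (simp add: subsolution_def)
qed

lemma subsolution_subset: "subsolution S r \<subseteq> S"
  by (simp add: subsolution_def)

lemma partial_sol_subsolution:
  assumes S: "partial_sol G x S" and r: "r \<in> S"
  shows "partial_sol G r (subsolution S r)"
proof (rule partial_solI)
  let ?T = "subsolution S r"
  show "?T \<subseteq> G" using partial_sol_subset[OF S] subsolution_subset by blast
  show r_T: "r \<in> ?T" using r by (simp add: subsolution_def)
  show "(edge_within ?T)\<^sup>*\<^sup>* r w" if "w \<in> ?T" for w
  proof -
    have "(edge_within S)\<^sup>*\<^sup>* r w" using that by (simp add: subsolution_def)
    then show ?thesis
    proof (induction rule: rtranclp_induct)
      case (step y z)
      then have "y \<in> ?T" by (simp add: subsolution_def)
      then have "z \<in> ?T" using step.hyps(2) subsolution_edge_closed by blast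
      with step \<open>y \<in> ?T\<close> show ?case by (simp add: rtranclp.rtrancl_into_rtrancl)
    qed simp
  qed
  show "w \<in> ?T" if "a \<in> ?T" "is_and a" "edge a w" for a w
    using that partial_sol_and_closed[OF S] subsolution_edge_closed subsolution_subset by blast
  show "\<exists>!w. w \<in> ?T \<and> edge v w" if v: "v \<in> ?T" "is_or v" for v
  proof -
    obtain w where "w \<in> S" "edge v w" "\<forall>w'. w' \<in> S \<and> edge v w' \<longrightarrow> w' = w"
      using partial_sol_or_child[OF S] v subsolution_subset by blast
    then show ?thesis using v subsolution_edge_closed subsolution_subset by blast
  qed
qed

lemma partial_sol_terminal_child:
  assumes S: "partial_sol G x S" and x: "is_or x" and t: "t \<in> S" "edge x t" "is_term t"
  shows "S = {x, t}"
proof -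
  have "w \<in> {x, t}" if "(edge_within S)\<^sup>*\<^sup>* x w" for w
    using that
  proof (induction rule: rtranclp_induct)
    case (step y z)
    then have "y = x" using not_edge_from_term[OF t(3)] by auto
    then show ?case using partial_sol_or_child_eq[OF S _ x t(1,2)] step.hyps(2) by blast
  qed simp
  then show ?thesis using S t(1) unfolding partial_sol_def by blast
qed

lemma partial_sol_terminal:
  assumes "x \<in> G" "t \<in> G" and x: "is_or x" and t: "edge x t" "is_term t"
  shows "partial_sol G x {x, t}"
proof (rule partial_solI)
  have "\<not> edge x x" "\<not> edge t w" for w
    using x edge_from_or[OF _ x] not_edge_from_term[OF t(2)] by auto
  then show "\<exists>!w. w \<in> {x, t} \<and> edge v w" if "v \<in> {x, t}" "is_or v" for v
    using that t by (cases t) auto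
  show "w \<in> {x, t}" if "a \<in> {x, t}" "is_and a" "edge a w" for a w
    using that x t(2) by (cases x; cases t) auto
  show "(edge_within {x, t})\<^sup>*\<^sup>* x w" if "w \<in> {x, t}" for w
    using that t(1) by auto
qed (use assms(1,2) in auto)

lemma psol_cost_terminal:
  assumes x: "is_or x" and t: "edge x t" "is_term t"
  shows "psol_cost {x, t} = cost x t"
proof -
  have "{(v, w). v \<in> {x, t} \<and> w \<in> {x, t} \<and> edge v w} = {(x, t)}"
    using x t edge_from_or[OF _ x] not_edge_from_term[OF t(2)] by auto
  then show ?thesis by (simp add: psol_cost_def)
qed

lemma child_sols_separated:
  assumes f: "f \<in> Vs I" and "k \<noteq> k'"
    and T: "partial_sol G (OrN (restr I f k) (Suc d)) T"
    and T': "partial_sol G (OrN (restr I f k') (Suc d)) T'"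
    and "v \<in> T" "edge\<^sup>*\<^sup>* v w"
  shows "Suc d \<le> depth w" "w \<notin> T'"
proof -
  have reach: "edge\<^sup>*\<^sup>* (OrN (restr I f k) (Suc d)) w"
    using partial_sol_reaches[OF T \<open>v \<in> T\<close>] \<open>edge\<^sup>*\<^sup>* v w\<close> by (rule rtranclp_trans)
  show "Suc d \<le> depth w" using reaches_depth_mono[OF reach] by simp
  show "w \<notin> T'"
    using child_cones_disjoint[OF f \<open>k \<noteq> k'\<close> reach] partial_sol_reaches[OF T'] by blast
qed

lemma and_split_separated:
  fixes I d f
  defines "o0 \<equiv> OrN (restr I f False) (Suc d)" and "o1 \<equiv> OrN (restr I f True) (Suc d)"
  assumes f: "f \<in> Vs I" and S0: "partial_sol G o0 S0" and S1: "partial_sol G o1 S1"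
  shows "w \<in> S0 \<union> S1 \<Longrightarrow> Suc d \<le> depth w" and "S0 \<inter> S1 = {}"
proof -
  have "Suc d \<le> depth w \<and> w \<notin> S1" if "w \<in> S0" for w
    using child_sols_separated[OF f _ S0[unfolded o0_def] S1[unfolded o1_def] that] by simp
  moreover have "Suc d \<le> depth w \<and> w \<notin> S0" if "w \<in> S1" for w
    using child_sols_separated[OF f _ S1[unfolded o1_def] S0[unfolded o0_def] that] by simp
  ultimately show "w \<in> S0 \<union> S1 \<Longrightarrow> Suc d \<le> depth w" and "S0 \<inter> S1 = {}" by blast+
qed

lemma edge_within_and_split:
  fixes I d f
  defines "x \<equiv> OrN I d" and "a \<equiv> AndN I d f"
    and "o0 \<equiv> OrN (restr I f False) (Suc d)" and "o1 \<equiv> OrN (restr I f True) (Suc d)"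
  assumes xa: "edge x a" and S0: "partial_sol G o0 S0" and S1: "partial_sol G o1 S1"
  shows "edge_within (insert x (insert a (S0 \<union> S1))) v w \<longleftrightarrow>
    v = x \<and> w = a \<or> v = a \<and> (w = o0 \<or> w = o1) \<or> edge_within S0 v w \<or> edge_within S1 v w"
proof -
  have f: "f \<in> Vs I" using xa by (simp add: x_def a_def)
  note sep = and_split_separated[OF f S0[unfolded o0_def] S1[unfolded o1_def]]
  show ?thesis
  proof
    assume vw: "edge_within (insert x (insert a (S0 \<union> S1))) v w"
    then have vw_edge: "edge v w" by simp
    consider "v = x" | "v = a" | "v \<in> S0" | "v \<in> S1" using vw by blast
    then show "v = x \<and> w = a \<or> v = a \<and> (w = o0 \<or> w = o1) \<or> edge_within S0 v w \<or> edge_within S1 v w"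
    proof cases
      case 1
      then have "\<not> is_or w" "depth w = d" using vw edge_from_or by (auto simp: x_def)
      then have "w \<notin> insert x (S0 \<union> S1)" using sep(1)[of w] by (cases w) (auto simp: x_def)
      then show ?thesis using vw 1 by blast
    next
      case 2
      then show ?thesis using vw by (auto simp: a_def o0_def o1_def)
    next
      case 3
      then have "Suc d \<le> depth w" "w \<notin> S1"
        using child_sols_separated[OF f _ S0[unfolded o0_def] S1[unfolded o1_def] 3 r_into_rtranclp[of edge, OF vw_edge]] by simp_all
      then show ?thesis using vw 3 by (auto simp: x_def a_def)
    next
      case 4
      then have "Suc d \<le> depth w" "w \<notin> S0"
        using child_sols_separated[OF f _ S1[unfolded o1_def] S0[unfolded o0_def] 4 r_into_rtranclp[of edge, OF vw_edge]] by simp_all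
      then show ?thesis using vw 4 by (auto simp: x_def a_def)
    qed
  next
    have "o0 \<in> S0" "o1 \<in> S1" using S0 S1 partial_sol_root by blast+
    then show "v = x \<and> w = a \<or> v = a \<and> (w = o0 \<or> w = o1) \<or> edge_within S0 v w \<or> edge_within S1 v w
      \<Longrightarrow> edge_within (insert x (insert a (S0 \<union> S1))) v w"
      using xa by (auto simp: a_def o0_def o1_def)
  qed
qed

lemma psol_cost_and_split:
  fixes I d f
  defines "x \<equiv> OrN I d" and "a \<equiv> AndN I d f"
    and "o0 \<equiv> OrN (restr I f False) (Suc d)" and "o1 \<equiv> OrN (restr I f True) (Suc d)"
  assumes "finite G" and xa: "edge x a" and S0: "partial_sol G o0 S0" and S1: "partial_sol G o1 S1"
  shows "psol_cost (insert x (insert a (S0 \<union> S1))) = cost x a + psol_cost S0 + psol_cost S1"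
proof -
  let ?E = "\<lambda>T. {(v, w). edge_within T v w}"
  have f: "f \<in> Vs I" using xa by (simp add: x_def a_def)
  note sep = and_split_separated[OF f S0[unfolded o0_def] S1[unfolded o1_def]]
  note split = edge_within_and_split[OF xa[unfolded x_def a_def] S0[unfolded o0_def] S1[unfolded o1_def],
      folded x_def a_def o0_def o1_def]
  have xa_out: "x \<notin> S0 \<union> S1" "a \<notin> S0 \<union> S1" using sep(1) by (fastforce simp: x_def a_def)+
  have "o0 \<in> S0" "o1 \<in> S1" using S0 S1 partial_sol_root by blast+
  then have "o0 \<noteq> o1" using sep(2) by blast
  have finite: "finite (?E S0)" "finite (?E S1)"
    using partial_sol_subset[OF S0] partial_sol_subset[OF S1] \<open>finite G\<close>
    by (auto intro: finite_subset[of _ "G \<times> G"])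
  have "?E (insert x (insert a (S0 \<union> S1)))
      = insert (x, a) (insert (a, o0) (insert (a, o1) (?E S0 \<union> ?E S1)))"
  proof (rule set_eqI)
    fix p :: "node \<times> node"
    show "p \<in> ?E (insert x (insert a (S0 \<union> S1)))
      \<longleftrightarrow> p \<in> insert (x, a) (insert (a, o0) (insert (a, o1) (?E S0 \<union> ?E S1)))"
      using split[of "fst p" "snd p"] by (cases p) auto
  qed
  moreover have "?E S0 \<inter> ?E S1 = {}" using sep(2) by blast
  moreover have "(x, a) \<notin> insert (a, o0) (insert (a, o1) (?E S0 \<union> ?E S1))"
    "(a, o0) \<notin> insert (a, o1) (?E S0 \<union> ?E S1)" "(a, o1) \<notin> ?E S0 \<union> ?E S1"
    using xa_out \<open>o0 \<noteq> o1\<close> by (auto simp: x_def a_def)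
  ultimately show ?thesis
    using finite by (simp add: psol_cost_def sum.union_disjoint a_def add.assoc)
qed

lemma partial_sol_and_join:
  fixes I d f
  defines "x \<equiv> OrN I d" and "a \<equiv> AndN I d f"
    and "o0 \<equiv> OrN (restr I f False) (Suc d)" and "o1 \<equiv> OrN (restr I f True) (Suc d)"
  assumes "x \<in> G" "a \<in> G" and xa: "edge x a"
    and S0: "partial_sol G o0 S0" and S1: "partial_sol G o1 S1"
  shows "partial_sol G x (insert x (insert a (S0 \<union> S1)))"
proof -
  let ?S = "insert x (insert a (S0 \<union> S1))"
  have f: "f \<in> Vs I" using xa by (simp add: x_def a_def)
  note sep = and_split_separated[OF f S0[unfolded o0_def] S1[unfolded o1_def]]
  note split = edge_within_and_split[OF xa[unfolded x_def a_def] S0[unfolded o0_def] S1[unfolded o1_def],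
      folded x_def a_def o0_def o1_def]
  have xa_out: "x \<notin> S0 \<union> S1" "a \<notin> S0 \<union> S1" using sep(1) by (fastforce simp: x_def a_def)+
  have roots: "o0 \<in> S0" "o1 \<in> S1" using S0 S1 partial_sol_root by blast+
  have a_children: "edge a w \<longleftrightarrow> w = o0 \<or> w = o1" for w by (simp add: a_def o0_def o1_def)
  have x_a: "edge_within ?S x a" using xa by simp
  have from_x: "edge_within ?S x w \<longleftrightarrow> w = a" for w
    using split[of x w] xa_out x_a by (auto simp: x_def a_def)
  have from_S0: "edge_within ?S v w \<longleftrightarrow> edge_within S0 v w" if "v \<in> S0" for v w
    using split[of v w] that xa_out sep(2) by auto
  have from_S1: "edge_within ?S v w \<longleftrightarrow> edge_within S1 v w" if "v \<in> S1" for v w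
    using split[of v w] that xa_out sep(2) by auto
  show ?thesis
  proof (rule partial_solI)
    show "?S \<subseteq> G"
      using assms(5,6) partial_sol_subset[OF S0] partial_sol_subset[OF S1] by blast
  next
    note prepend = converse_rtranclp_into_rtranclp[of "edge_within ?S"]
    have "(edge_within ?S)\<^sup>*\<^sup>* a w" if "w \<in> S0 \<union> S1" for w
    proof -
      have a_o: "edge_within ?S a o0" "edge_within ?S a o1" using roots a_children by simp_all
      have "(edge_within ?S)\<^sup>*\<^sup>* o0 w \<or> (edge_within ?S)\<^sup>*\<^sup>* o1 w"
        using that partial_sol_reaches_within_mono[of G _ _ ?S] S0 S1 by blast
      then show ?thesis using prepend[OF a_o(1)] prepend[OF a_o(2)] by blast
    qed
    then show "(edge_within ?S)\<^sup>*\<^sup>* x w" if "w \<in> ?S" for w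
      using that prepend[OF x_a] by blast
  next
    show "w \<in> ?S" if "v \<in> ?S" "is_and v" "edge v w" for v w
      using that partial_sol_and_closed[OF S0] partial_sol_and_closed[OF S1] roots a_children
      by (auto simp: x_def)
  next
    fix v assume v: "v \<in> ?S" "is_or v"
    then consider "v = x" | "v \<in> S0" | "v \<in> S1" by (auto simp: a_def)
    then show "\<exists>!w. w \<in> ?S \<and> edge v w"
    proof cases
      case 1
      then show ?thesis using from_x by auto
    next
      case 2
      then show ?thesis using from_S0 partial_sol_or_child[OF S0 2 v(2)] by simp
    next
      case 3
      then show ?thesis using from_S1 partial_sol_or_child[OF S1 3 v(2)] by simp
    qed
  qed simp
qed

lemma partial_sol_and_child_split:
  fixes I d f
  defines "x \<equiv> OrN I d" and "a \<equiv> AndN I d f"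
    and "o0 \<equiv> OrN (restr I f False) (Suc d)" and "o1 \<equiv> OrN (restr I f True) (Suc d)"
  assumes S: "partial_sol G x S" and a: "a \<in> S" "edge x a"
  obtains S0 S1 where "partial_sol G o0 S0" "partial_sol G o1 S1"
    and "S = insert x (insert a (S0 \<union> S1))"
proof (rule that)
  have "edge a o0" "edge a o1" by (simp_all add: a_def o0_def o1_def)
  then have "o0 \<in> S" "o1 \<in> S"
    using partial_sol_and_closed[OF S a(1)] by (simp_all add: a_def)
  then show "partial_sol G o0 (subsolution S o0)" "partial_sol G o1 (subsolution S o1)"
    using partial_sol_subsolution[OF S] by blast+
  have x_in: "x \<in> S" using partial_sol_root[OF S] .
  have "w \<in> insert x (insert a (subsolution S o0 \<union> subsolution S o1))"
    if "(edge_within S)\<^sup>*\<^sup>* x w" for w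
    using that
  proof (induction rule: rtranclp_induct)
    case (step y z)
    then have z: "z \<in> S" "edge y z" by simp_all
    consider "y = x" | "y = a" | "y \<in> subsolution S o0 \<union> subsolution S o1" using step.IH by blast
    then show ?case
    proof cases
      case 1
      then have "z = a"
        using partial_sol_or_child_eq[OF S x_in _ a] z by (simp add: x_def)
      then show ?thesis by simp
    next
      case 2
      then have "z = o0 \<or> z = o1" using z(2) by (simp add: a_def o0_def o1_def)
      then show ?thesis using z(1) by (auto simp: subsolution_def)
    next
      case 3
      then show ?thesis using subsolution_edge_closed z by blast
    qed
  qed simp
  then show "S = insert x (insert a (subsolution S o0 \<union> subsolution S o1))"
    using partial_sol_reaches_within[OF S] x_in a(1) subsolution_subset by blast
qed

section \<open>Optimal cost and the Bellman inequalities\<close>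

definition opt_cost :: "node set \<Rightarrow> node \<Rightarrow> ereal" where
  "opt_cost G x = (if {S. partial_sol G x S} = {} then \<infinity> else Min (psol_cost ` {S. partial_sol G x S}))"

lemma finite_partial_sols: "finite G \<Longrightarrow> finite {S. partial_sol G x S}"
  by (rule finite_subset[of _ "Pow G"]) (auto dest: partial_sol_subset)

lemma opt_cost_le: "finite G \<Longrightarrow> partial_sol G x S \<Longrightarrow> opt_cost G x \<le> psol_cost S"
  unfolding opt_cost_def using finite_partial_sols by auto

lemma opt_cost_attained:
  assumes "finite G" "partial_sol G x S"
  obtains S' where "partial_sol G x S'" "opt_cost G x = psol_cost S'"
proof -
  have "Min (psol_cost ` {S. partial_sol G x S}) \<in> psol_cost ` {S. partial_sol G x S}"
    using assms finite_partial_sols by (intro Min_in) auto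
  moreover have "opt_cost G x = Min (psol_cost ` {S. partial_sol G x S})"
    using assms(2) unfolding opt_cost_def by auto
  ultimately show ?thesis using that by auto
qed

lemma opt_cost_greatest:
  assumes "finite G" "\<And>S. partial_sol G x S \<Longrightarrow> c \<le> psol_cost S"
  shows "c \<le> opt_cost G x"
proof (cases "\<exists>S. partial_sol G x S")
  case True
  then obtain S where "partial_sol G x S" "opt_cost G x = psol_cost S"
    using opt_cost_attained[OF assms(1)] by blast
  then show ?thesis using assms(2) by simp
qed (simp add: opt_cost_def)

lemma partial_sol_mono: "partial_sol G x S \<Longrightarrow> G \<subseteq> G' \<Longrightarrow> partial_sol G' x S"
  unfolding partial_sol_def by blast

lemma opt_cost_antimono: "finite G' \<Longrightarrow> G \<subseteq> G' \<Longrightarrow> opt_cost G' x \<le> opt_cost G x"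
  by (meson finite_subset opt_cost_greatest opt_cost_le partial_sol_mono)

lemma orval_le_and: "a \<in> G \<Longrightarrow> is_and a \<Longrightarrow> edge x a \<Longrightarrow> orval G V x \<le> cost x a + andval V a"
  unfolding orval_def by (rule Inf_lower) blast

lemma orval_le_term: "t \<in> G \<Longrightarrow> is_term t \<Longrightarrow> edge x t \<Longrightarrow> orval G V x \<le> cost x t"
  unfolding orval_def by (rule Inf_lower) blast

lemma orval_greatest:
  assumes "\<And>a. a \<in> G \<Longrightarrow> is_and a \<Longrightarrow> edge x a \<Longrightarrow> c \<le> cost x a + andval V a"
    and "\<And>t. t \<in> G \<Longrightarrow> is_term t \<Longrightarrow> edge x t \<Longrightarrow> c \<le> cost x t"
  shows "c \<le> orval G V x"
  unfolding orval_def using assms by (auto intro: Inf_greatest)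

lemma orval_mono:
  assumes "\<And>y. is_or y \<Longrightarrow> V y \<le> V' y"
  shows "orval G V x \<le> orval G V' x"
proof (rule orval_greatest)
  fix a assume "a \<in> G" "is_and a" "edge x a"
  moreover have "andval V a \<le> andval V' a"
    using assms by (cases a) (auto intro: add_mono)
  ultimately show "orval G V x \<le> cost x a + andval V' a"
    by (meson add_left_mono order.trans orval_le_and)
qed (rule orval_le_term)

lemma opt_cost_le_orval:
  assumes G: "finite G" and x: "x \<in> G" "is_or x"
  shows "opt_cost G x \<le> orval G (opt_cost G) x"
proof (rule orval_greatest)
  fix t assume "t \<in> G" "is_term t" "edge x t"
  then show "opt_cost G x \<le> cost x t"
    using opt_cost_le[OF G partial_sol_terminal] psol_cost_terminal x by metis
next
  fix a assume a: "a \<in> G" "is_and a" "edge x a"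
  obtain I d where x_eq: "x = OrN I d" using x(2) by (cases x) auto
  obtain f where a_eq: "a = AndN I d f" using a(2,3) x_eq by (cases a) auto
  define o0 where "o0 = OrN (restr I f False) (Suc d)"
  define o1 where "o1 = OrN (restr I f True) (Suc d)"
  have andval: "andval (opt_cost G) a = opt_cost G o0 + opt_cost G o1"
    by (simp add: a_eq o0_def o1_def)
  show "opt_cost G x \<le> cost x a + andval (opt_cost G) a"
  proof (cases "\<exists>S0 S1. partial_sol G o0 S0 \<and> partial_sol G o1 S1")
    case True
    then obtain S0 S1 where S0: "partial_sol G o0 S0" "opt_cost G o0 = psol_cost S0"
      and S1: "partial_sol G o1 S1" "opt_cost G o1 = psol_cost S1"
      by (meson opt_cost_attained[OF G])
    have "opt_cost G x \<le> psol_cost (insert x (insert a (S0 \<union> S1)))"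
      using partial_sol_and_join[of I d G f S0 S1] opt_cost_le[OF G] x a S0(1) S1(1)
      unfolding x_eq a_eq o0_def o1_def by blast
    also have "\<dots> = cost x a + andval (opt_cost G) a"
      using psol_cost_and_split[of G I d f S0 S1] G a(3) S0 S1 andval
      unfolding x_eq a_eq o0_def o1_def by (simp add: add.assoc)
    finally show ?thesis .
  next
    case False
    then have "opt_cost G o0 = \<infinity> \<or> opt_cost G o1 = \<infinity>" by (auto simp: opt_cost_def)
    then show ?thesis using andval by auto
  qed
qed

lemma le_psol_cost_if_le_orval:
  assumes G: "finite G" and V: "\<And>y. y \<in> G \<Longrightarrow> is_or y \<Longrightarrow> V y \<le> orval G V y"
  shows "partial_sol G x S \<Longrightarrow> is_or x \<Longrightarrow> V x \<le> psol_cost S"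
proof (induction "card S" arbitrary: x S rule: less_induct)
  case less
  note S = less.prems(1) and x = less.prems(2)
  have "x \<in> S" "S \<subseteq> G" using partial_sol_root[OF S] partial_sol_subset[OF S] .
  then have "finite S" "x \<in> G" using G finite_subset by blast+
  then have Vx: "V x \<le> orval G V x" using V x by blast
  obtain w where w: "w \<in> S" "edge x w" using partial_sol_or_child[OF S \<open>x \<in> S\<close> x] by blast
  with \<open>S \<subseteq> G\<close> have "w \<in> G" by blast
  show ?case
  proof (cases "is_term w")
    case True
    then have "psol_cost S = cost x w"
      using partial_sol_terminal_child[OF S x w] psol_cost_terminal[OF x w(2)] by simp
    then show ?thesis using order_trans[OF Vx orval_le_term[OF \<open>w \<in> G\<close> True w(2)]] by simp
  next
    case False
    obtain I d where x_eq: "x = OrN I d" using x by (cases x) auto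
    obtain f where w_eq: "w = AndN I d f" using w(2) False x_eq by (cases w) auto
    define o0 where "o0 = OrN (restr I f False) (Suc d)"
    define o1 where "o1 = OrN (restr I f True) (Suc d)"
    obtain S0 S1 where S0: "partial_sol G o0 S0" and S1: "partial_sol G o1 S1"
      and S_eq: "S = insert x (insert w (S0 \<union> S1))"
      using partial_sol_and_child_split[OF S[unfolded x_eq] w[unfolded w_eq x_eq]]
      unfolding o0_def o1_def x_eq w_eq by blast
    have f: "f \<in> Vs I" using w(2) by (simp add: x_eq w_eq)
    have "x \<notin> S0 \<union> S1"
      using and_split_separated(1)[OF f S0[unfolded o0_def] S1[unfolded o1_def]] by (fastforce simp: x_eq)
    then have "S0 \<subset> S" "S1 \<subset> S" using S_eq by auto
    then have "card S0 < card S" "card S1 < card S"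
      using psubset_card_mono[OF \<open>finite S\<close>] by blast+
    then have IH: "V o0 \<le> psol_cost S0" "V o1 \<le> psol_cost S1"
      using less.hyps S0 S1 by (simp_all add: o0_def o1_def)
    have "V x \<le> cost x w + andval V w"
      using order_trans[OF Vx orval_le_and[OF \<open>w \<in> G\<close> _ w(2)]] by (simp add: w_eq)
    also have "\<dots> = cost x w + V o0 + V o1" by (simp add: w_eq o0_def o1_def add.assoc)
    also have "\<dots> \<le> cost x w + psol_cost S0 + psol_cost S1" using IH by (simp add: add_mono)
    also have "\<dots> = psol_cost S"
      using psol_cost_and_split[OF G w(2)[unfolded x_eq w_eq] S0[unfolded o0_def] S1[unfolded o1_def]]
      by (simp add: S_eq x_eq w_eq)
    finally show ?thesis .
  qed
qed

lemma le_opt_cost_if_le_orval: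
  assumes G: "finite G" and V: "\<And>y. y \<in> G \<Longrightarrow> is_or y \<Longrightarrow> V y \<le> orval G V y"
    and x: "is_or x"
  shows "V x \<le> opt_cost G x"
  using le_psol_cost_if_le_orval[OF G V _ x] by (rule opt_cost_greatest[OF G])

section \<open>Propagation of upper bounds\<close>

lemma orval_cong:
  assumes "\<And>a w. a \<in> G \<Longrightarrow> is_and a \<Longrightarrow> edge x a \<Longrightarrow> edge a w \<Longrightarrow> V w = V' w"
  shows "orval G V x = orval G V' x"
proof -
  have "andval V a = andval V' a" if "a \<in> G" "is_and a" "edge x a" for a
    using assms[OF that] by (cases a) auto
  then show ?thesis unfolding orval_def by (metis (no_types, lifting))
qed

lemma orval_graph_cong:
  assumes "\<And>w. edge x w \<Longrightarrow> w \<in> G \<longleftrightarrow> w \<in> G'"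
  shows "orval G V x = orval G' V x"
proof -
  have "{cost x a + andval V a |a. a \<in> G \<and> is_and a \<and> edge x a}
      = {cost x a + andval V a |a. a \<in> G' \<and> is_and a \<and> edge x a}"
    "{cost x t |t. t \<in> G \<and> is_term t \<and> edge x t} = {cost x t |t. t \<in> G' \<and> is_term t \<and> edge x t}"
    using assms by blast+
  then show ?thesis unfolding orval_def by simp
qed

lemma orval_no_children:
  assumes "\<And>w. edge x w \<Longrightarrow> w \<notin> G"
  shows "orval G V x = \<infinity>"
proof -
  have "{cost x a + andval V a |a. a \<in> G \<and> is_and a \<and> edge x a} = {}"
    "{cost x t |t. t \<in> G \<and> is_term t \<and> edge x t} = {}"
    using assms by blast+
  then show ?thesis unfolding orval_def by (simp only: Un_empty_left Inf_empty top_ereal_def)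
qed

lemma orval_update_self:
  assumes "is_or u"
  shows "orval G (V(u := c)) u = orval G V u"
proof (rule orval_cong)
  fix a w assume "is_and a" "edge u a" "edge a w"
  then have "depth w \<noteq> depth u" using edge_from_and edge_from_or[OF _ assms] by fastforce
  then show "(V(u := c)) w = V w" by auto
qed

lemma orval_update_nonparent:
  assumes "x \<in> G" "is_or x" "x \<notin> parents G u"
  shows "orval G (V(u := c)) x = orval G V x"
proof (rule orval_cong)
  fix a w assume "a \<in> G" "is_and a" "edge x a" "edge a w"
  then have "w \<noteq> u" using assms unfolding parents_def by blast
  then show "(V(u := c)) w = V w" by simp
qed

lemma propagate_opt_cost:
  assumes "propagate better G V Q V'"
    and "\<And>v old. v < old \<Longrightarrow> better v old" and "finite G"
    and "Q \<subseteq> {q \<in> G. is_or q}"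
    and "\<And>y. is_or y \<Longrightarrow> opt_cost G y \<le> V y"
    and "\<And>y. y \<in> G \<Longrightarrow> is_or y \<Longrightarrow> y \<notin> Q \<Longrightarrow> V y \<le> orval G V y"
    and "is_or x"
  shows "V' x = opt_cost G x"
  using assms
proof (induction arbitrary: x rule: propagate.induct)
  case (prop_done better G V)
  have "V x \<le> opt_cost G x"
    by (rule le_opt_cost_if_le_orval) (use prop_done.prems in simp_all)
  then show ?case using prop_done.prems(4,6) by (simp add: order_antisym)
next
  case (prop_upd u Q better G V V')
  note G = \<open>finite G\<close>
  let ?V = "V(u := orval G V u)"
  have u: "u \<in> G" "is_or u" using prop_upd.hyps(1) prop_upd.prems(3) by auto
  show ?case
  proof (rule prop_upd.IH)
    show "(Q - {u}) \<union> parents G u \<subseteq> {q \<in> G. is_or q}"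
      using prop_upd.prems(3) by (auto simp: parents_def)
  next
    fix y assume "is_or y"
    have "opt_cost G u \<le> orval G V u"
      using order_trans[OF opt_cost_le_orval[OF G u] orval_mono] prop_upd.prems(4) by blast
    then show "opt_cost G y \<le> ?V y" using prop_upd.prems(4) \<open>is_or y\<close> by simp
  next
    fix y assume y: "y \<in> G" "is_or y" "y \<notin> (Q - {u}) \<union> parents G u"
    show "?V y \<le> orval G ?V y"
    proof (cases "y = u")
      case True
      then show ?thesis using orval_update_self[OF u(2)] by simp
    next
      case False
      then show ?thesis
        using orval_update_nonparent[of y G u V] prop_upd.prems(5) y by simp
    qed
  qed (use prop_upd.prems in simp_all)
next
  case (prop_noupd u Q better G V V')
  have "V u \<le> orval G V u" using prop_noupd.hyps(3) prop_noupd.prems(1) by (meson not_le)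
  then show ?case using prop_noupd.prems by (intro prop_noupd.IH) auto
qed

section \<open>The main loop\<close>

lemma descend_result:
  assumes "descend G E LB UB u v" "u \<in> G" "is_or u" "\<forall>p \<in> E. expand_nodes p \<subseteq> G"
  shows "v \<in> G \<and> is_or v"
  using assms
proof (induction rule: descend.induct)
  case (down u E a I d f G LB o0 o1 UB v)
  have "o0 \<in> grandchildren u" "o1 \<in> grandchildren u"
    using down.hyps(2,4,6,7) unfolding grandchildren_def by (auto intro!: exI[of _ a])
  then have "o0 \<in> G" "o1 \<in> G"
    using down.hyps(1) down.prems(3) unfolding expand_nodes_def by blast+
  then show ?case using down.IH down.prems(3) by (simp add: down.hyps(6,7))
qed simp

lemma finite_expand_nodes:
  assumes "is_or v"
  shows "finite (expand_nodes v)"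
proof -
  obtain I d where OrN: "v = OrN I d" using assms by (cases v) auto
  have "grandchildren v \<subseteq> (\<lambda>(f, k). OrN (restr I f k) (Suc d)) ` ({1..F} \<times> UNIV)"
    unfolding grandchildren_def OrN by (force simp: Vs_def)
  then have "finite (grandchildren v)" by (rule finite_subset) simp
  moreover have "{a. is_and a \<and> edge v a} \<subseteq> (\<lambda>f. AndN I d f) ` {1..F}"
    unfolding OrN by (force simp: Vs_def)
  then have "finite {a. is_and a \<and> edge v a}" by (rule finite_subset) simp
  moreover have "{t. is_term t \<and> edge v t} \<subseteq> {TermN I d}"
    unfolding OrN by auto
  then have "finite {t. is_term t \<and> edge v t}" by (rule finite_subset) simp
  ultimately show ?thesis unfolding expand_nodes_def by simp
qed

lemma expand_nodes_non_or_child: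
  "w \<in> expand_nodes v \<Longrightarrow> \<not> is_or w \<Longrightarrow> edge v w"
  unfolding expand_nodes_def grandchildren_def using edge_from_and(1) by blast

lemma orval_expand_other:
  assumes "is_or x" "is_or v" "x \<noteq> v"
  shows "orval (G \<union> expand_nodes v) V x = orval G V x"
proof (rule orval_graph_cong)
  fix w assume "edge x w"
  then have "\<not> edge v w" using or_parent_unique assms by blast
  then show "w \<in> G \<union> expand_nodes v \<longleftrightarrow> w \<in> G"
    using expand_nodes_non_or_child edge_from_or(1)[OF \<open>edge x w\<close> assms(1)] by blast
qed

definition loop_invariant :: "state \<Rightarrow> bool" where
  "loop_invariant s \<longleftrightarrow> (case s of (G, E, LB, UB) \<Rightarrow>
     finite G \<and> root \<in> G \<and> (\<forall>p \<in> E. expand_nodes p \<subseteq> G)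
     \<and> (\<forall>p w. is_or p \<longrightarrow> edge p w \<longrightarrow> w \<in> G \<longrightarrow> p \<in> G)
     \<and> (\<forall>x. is_or x \<longrightarrow> UB x = opt_cost G x))"

lemma loop_invariant_init: "loop_invariant init"
proof -
  have "\<not> partial_sol {root} x S" for x S
  proof
    assume S: "partial_sol {root} x S"
    then have "S = {root}" using partial_sol_subset partial_sol_root by blast
    moreover have "is_or root" by (simp add: root_def)
    ultimately show False
      using partial_sol_or_child[OF S] edge_from_or(1) by fastforce
  qed
  moreover have "\<not> edge p root" if "is_or p" for p
    using edge_from_or(1)[OF _ that] by (fastforce simp: root_def)
  ultimately show ?thesis unfolding loop_invariant_def init_def opt_cost_def by auto
qed

lemma ub_le_orval_after_expansion:
  assumes "finite G" and parents_in: "\<forall>p w. is_or p \<longrightarrow> edge p w \<longrightarrow> w \<in> G \<longrightarrow> p \<in> G"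
    and UB: "\<forall>x. is_or x \<longrightarrow> UB x = opt_cost G x"
    and "is_or v" and y: "is_or y" "y \<noteq> v"
  shows "UB y \<le> orval (G \<union> expand_nodes v) UB y"
proof -
  have "orval (G \<union> expand_nodes v) UB y = orval G (opt_cost G) y"
    using orval_expand_other[OF y(1) \<open>is_or v\<close> y(2)] orval_cong[of G y UB "opt_cost G"]
      UB edge_from_and(1) by metis
  moreover have "opt_cost G y \<le> orval G (opt_cost G) y"
  proof (cases "y \<in> G")
    case True
    then show ?thesis using opt_cost_le_orval \<open>finite G\<close> y(1) by blast
  next
    case False
    then have "orval G (opt_cost G) y = \<infinity>" using orval_no_children parents_in y(1) by blast
    then show ?thesis by simp
  qed
  ultimately show ?thesis using UB y(1) by simp
qed

lemma loop_invariant_iter: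
  assumes inv: "loop_invariant s" and step: "iter s s'"
  shows "loop_invariant s'"
  using step
proof cases
  case (1 LB UB G E v G' LB' LB'' UB')
  have G: "finite G" "root \<in> G" and expanded: "\<forall>p \<in> E. expand_nodes p \<subseteq> G"
    and parents_in: "\<forall>p w. is_or p \<longrightarrow> edge p w \<longrightarrow> w \<in> G \<longrightarrow> p \<in> G"
    and UB: "\<forall>x. is_or x \<longrightarrow> UB x = opt_cost G x"
    using inv unfolding 1 loop_invariant_def by auto
  have v: "v \<in> G" "is_or v"
    using descend_result[OF \<open>descend G E LB UB root v\<close> G(2) _ expanded] by (simp_all add: root_def)
  have "finite G'" using G(1) finite_expand_nodes[OF v(2)] by (simp add: 1)
  have parents_in': "p \<in> G'" if "is_or p" "edge p w" "w \<in> G'" for p w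
  proof (cases "w \<in> G")
    case False
    then have "edge v w" using that expand_nodes_non_or_child edge_from_or(1) by (simp add: 1)
    then have "p = v" using or_parent_unique that(1,2) v(2) by blast
    then show ?thesis using v(1) by (simp add: 1)
  qed (use parents_in that in \<open>simp add: 1\<close>)
  have "UB' x = opt_cost G' x" if "is_or x" for x
  proof (rule propagate_opt_cost[OF \<open>propagate (\<lambda>v old. v < old) G' UB {v} UB'\<close> _ \<open>finite G'\<close>])
    show "{v} \<subseteq> {q \<in> G'. is_or q}" using v by (simp add: 1)
    show "opt_cost G' y \<le> UB y" if "is_or y" for y
      using opt_cost_antimono[OF \<open>finite G'\<close>, of G y] UB that by (simp add: 1)
    show "UB y \<le> orval G' UB y" if "is_or y" "y \<notin> {v}" for y
      using ub_le_orval_after_expansion[OF G(1) parents_in UB v(2)] that by (simp add: 1)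
  qed (use that in simp_all)
  then show ?thesis
    unfolding 1 loop_invariant_def using \<open>finite G'\<close> G(2) expanded parents_in' by (auto simp: 1)
qed

lemma loop_invariant_reachable: "iter\<^sup>*\<^sup>* init s \<Longrightarrow> loop_invariant s"
  by (induction rule: rtranclp_induct) (auto intro: loop_invariant_init loop_invariant_iter)

end

theorem lemma16:
  fixes N F :: nat and X :: "nat \<Rightarrow> nat \<Rightarrow> bool" and Y :: "nat \<Rightarrow> bool"
    and rho1 rho0 alpha beta :: real
    and s0 :: state and G E :: "node set" and LB UB :: "node \<Rightarrow> ereal" and u :: node
  assumes "rho1 > 0" and "rho0 > 0" and "0 < alpha" and "alpha < 1" and "beta \<ge> 0"
    and "(MT_iter N F X Y rho1 rho0 alpha beta)\<^sup>*\<^sup>* (MT_init N F X Y rho1 rho0 alpha beta) s0"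
    and "MT_iter N F X Y rho1 rho0 alpha beta s0 (G, E, LB, UB)"
    and "u \<in> G" and "is_or u"
  shows "(if {S. MT_partial_sol N F X Y rho1 rho0 alpha beta G u S} = {} then UB u = \<infinity>
          else UB u = Min (MT_psol_cost N F X Y rho1 rho0 alpha beta
                             ` {S. MT_partial_sol N F X Y rho1 rho0 alpha beta G u S}))"
proof -
  interpret maptree N F X Y rho1 rho0 alpha beta .
  have "iter\<^sup>*\<^sup>* init (G, E, LB, UB)"
    using assms(6,7) unfolding MT_iter_def MT_init_def by (rule rtranclp.rtrancl_into_rtrancl)
  then have "UB u = opt_cost G u"
    using loop_invariant_reachable \<open>is_or u\<close> unfolding loop_invariant_def by auto
  then show ?thesis unfolding MT_partial_sol_def MT_psol_cost_def opt_cost_def by metis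
qed

end
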